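(* Let $S=[S_1,\ldots,S_m]$ be a sequence of propositional formulae and let $S_i$ be one of its formulae. Then $S \cdot [S_i] \equiv S$ and $S \cdot [\neg S_i] \equiv S$.
   Context: Models are truth assignments. For a formula $G$: $I \leq_G J$ iff $I \models G$ or $J \not\models G$. For a sequence $S=[S_1,\ldots,S_m]$: $I \leq_S J$ iff either $S=[]$, or ($I \leq_{S_1} J$ and (either $J \not\leq_{S_1} I$ or $I \leq_R J$)), where $R=[S_2,\ldots,S_m]$. For sequences, $S\equiv R$ means $I \leq_S J$ and $I\leq_R J$ coincide for all pairs of models $I,J$. $S\cdot R$ denotes concatenation of sequences. *)

theory Defs
  imports Main
begin

datatype 'a form =
    Atom 'a
  | FTrue
  | FFalse
  | Neg "'a form"
  | And "'a form" "'a form"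
  | Or "'a form" "'a form"
  | Imp "'a form" "'a form"
  | Iff "'a form" "'a form"

type_synonym 'a model = "'a \<Rightarrow> bool"

fun models :: "'a model \<Rightarrow> 'a form \<Rightarrow> bool" where
  "models I (Atom p) = I p"
| "models I FTrue = True"
| "models I FFalse = False"
| "models I (Neg F) = (\<not> models I F)"
| "models I (And F G) = (models I F \<and> models I G)"
| "models I (Or F G) = (models I F \<or> models I G)"
| "models I (Imp F G) = (models I F \<longrightarrow> models I G)"
| "models I (Iff F G) = (models I F \<longleftrightarrow> models I G)"

definition le_form :: "'a model \<Rightarrow> 'a form \<Rightarrow> 'a model \<Rightarrow> bool" where
  "le_form I G J \<longleftrightarrow> (models I G \<or> \<not> models J G)"

fun le_seq :: "'a model \<Rightarrow> 'a form list \<Rightarrow> 'a model \<Rightarrow> bool" where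
  "le_seq I [] J = True"
| "le_seq I (S1 # R) J =
     (le_form I S1 J \<and> (\<not> le_form J S1 I \<or> le_seq I R J))"

definition seq_equiv :: "'a form list \<Rightarrow> 'a form list \<Rightarrow> bool" where
  "seq_equiv S R \<longleftrightarrow> (\<forall>I J. le_seq I S J = le_seq I R J)"

end

theory Submission
  imports Defs
begin

text \<open>Appending a formula that cannot tell apart two models agreeing on every formula of S
  leaves the order unchanged: the appended tail is consulted only for such pairs, and there
  it compares models on which the formula has the same value.\<close>

lemma le_seq_append:
  "le_seq I (S @ T) J \<longleftrightarrow>
     le_seq I S J \<and> ((\<forall>F\<in>set S. models I F = models J F) \<longrightarrow> le_seq I T J)"
  by (induction S) (auto simp: le_form_def)

lemma seq_equiv_append_determined:
  assumes "\<And>I J. \<forall>G\<in>set S. models I G = models J G \<Longrightarrow> models I F = models J F"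
  shows "seq_equiv (S @ [F]) S"
  unfolding seq_equiv_def le_seq_append
  using assms by (auto simp: le_form_def)

theorem theorem8:
  fixes S :: "'a form list" and i :: nat
  assumes "i < length S"
  shows "seq_equiv (S @ [S ! i]) S \<and> seq_equiv (S @ [Neg (S ! i)]) S"
proof -
  have "S ! i \<in> set S"
    using assms by simp
  then show ?thesis
    by (auto intro!: seq_equiv_append_determined)
qed

end
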